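(* Let $g\geq 1$, $k\geq 1$, $r\geq 1$ be integers and let $x$ be an integer with $g+1\leq x\leq 2g$. Let $T$ be the tree obtained from $r$ stars $K_{1,g}$ with centers $v_1,\ldots,v_r$, one star $K_{1,x}$ with center $v_{r+1}$, and $k$ further vertices $w,u_1,\ldots,u_{k-1}$, by adding the edges $wu_i$ ($1\le i\le k-1$) and $wv_i$ ($1\leq i\leq r+1$). Then $T$ has order $n=(g+1)r+x+1+k$, has an $R_g$-cutset, and $$\kappa_g(T)=k.$$
   Context: All graphs are finite and simple. $K_{1,t}$ denotes the star with one center and $t$ leaves. A set $S\subseteq V(G)$ is a cutset if $G-S$ is disconnected. For a non-negative integer $g$, a cutset $S$ is an $R_g$-cutset if every connected component of $G-S$ has at least $g+1$ vertices. If $G$ has at least one $R_g$-cutset, the $g$-extra connectivity $\kappa_g(G)$ is the minimum cardinality of an $R_g$-cutset of $G$. *)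

theory Defs
  imports Main
begin

text \<open>A finite simple graph is given by a finite vertex set V and a symmetric,
irreflexive adjacency relation E (only edges between vertices of V matter).\<close>

definition reach_in :: "'a set \<Rightarrow> ('a \<Rightarrow> 'a \<Rightarrow> bool) \<Rightarrow> 'a \<Rightarrow> 'a \<Rightarrow> bool" where
  "reach_in A E a b \<longleftrightarrow> (a, b) \<in> {(x, y). x \<in> A \<and> y \<in> A \<and> E x y}\<^sup>*"

definition comp_in :: "'a set \<Rightarrow> ('a \<Rightarrow> 'a \<Rightarrow> bool) \<Rightarrow> 'a \<Rightarrow> 'a set" where
  "comp_in A E a = {b \<in> A. reach_in A E a b}"

definition is_cutset :: "'a set \<Rightarrow> ('a \<Rightarrow> 'a \<Rightarrow> bool) \<Rightarrow> 'a set \<Rightarrow> bool" where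
  "is_cutset V E S \<longleftrightarrow> S \<subseteq> V \<and> (\<exists>a\<in>V - S. \<exists>b\<in>V - S. \<not> reach_in (V - S) E a b)"

definition is_Rg_cutset :: "nat \<Rightarrow> 'a set \<Rightarrow> ('a \<Rightarrow> 'a \<Rightarrow> bool) \<Rightarrow> 'a set \<Rightarrow> bool" where
  "is_Rg_cutset g V E S \<longleftrightarrow> is_cutset V E S \<and>
     (\<forall>a\<in>V - S. card (comp_in (V - S) E a) \<ge> g + 1)"

definition kappa_g :: "nat \<Rightarrow> 'a set \<Rightarrow> ('a \<Rightarrow> 'a \<Rightarrow> bool) \<Rightarrow> nat" where
  "kappa_g g V E = (LEAST m. \<exists>S. is_Rg_cutset g V E S \<and> card S = m)"

text \<open>The tree T. Vertices: W = w, U i = u_i, C i = v_i (star centers),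
  L i j = j-th leaf of the star with center v_i.\<close>
datatype vtx = W | U nat | C nat | L nat nat

definition T_verts :: "nat \<Rightarrow> nat \<Rightarrow> nat \<Rightarrow> nat \<Rightarrow> vtx set" where
  "T_verts g k r x =
     {W} \<union> {U i | i. 1 \<le> i \<and> i \<le> k - 1} \<union> {C i | i. 1 \<le> i \<and> i \<le> r + 1}
     \<union> {L i j | i j. 1 \<le> i \<and> i \<le> r \<and> 1 \<le> j \<and> j \<le> g}
     \<union> {L (r + 1) j | j. 1 \<le> j \<and> j \<le> x}"

definition T_adj0 :: "vtx \<Rightarrow> vtx \<Rightarrow> bool" where
  "T_adj0 a b \<longleftrightarrow> (\<exists>i. a = W \<and> b = U i) \<or> (\<exists>i. a = W \<and> b = C i)
     \<or> (\<exists>i j. a = C i \<and> b = L i j)"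

definition T_adj :: "vtx \<Rightarrow> vtx \<Rightarrow> bool" where
  "T_adj a b \<longleftrightarrow> T_adj0 a b \<or> T_adj0 b a"

end

theory Submission
  imports Defs
begin

text \<open>Every vertex of an \<open>R\<^sub>g\<close>-cutset's complement lies in a component with at least
  \<open>g + 1 \<ge> 2\<close> vertices, so no vertex outside the cutset is isolated. In \<open>T\<close> this forces
  every pendant vertex \<open>u\<^sub>i\<close> and the hub \<open>w\<close> into the cutset: if \<open>w\<close> survived, each star
  centre would survive too (else its leaves would be isolated), and everything would be
  connected through \<open>w\<close>. Hence every \<open>R\<^sub>g\<close>-cutset contains \<open>{w, u\<^sub>1, \<dots>, u\<^sub>k\<^sub>-\<^sub>1}\<close>;
  conversely, deleting exactly these \<open>k\<close> vertices leaves the \<open>r + 1\<close> stars, each with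
  at least \<open>g + 1\<close> vertices.\<close>

lemma reach_in_refl: "reach_in A E a a"
  unfolding reach_in_def by simp

lemma reach_in_edge: "a \<in> A \<Longrightarrow> b \<in> A \<Longrightarrow> E a b \<Longrightarrow> reach_in A E a b"
  unfolding reach_in_def by (rule r_into_rtrancl) auto

lemma reach_in_trans: "reach_in A E a b \<Longrightarrow> reach_in A E b c \<Longrightarrow> reach_in A E a c"
  unfolding reach_in_def by (rule rtrancl_trans)

lemma reach_in_sym:
  assumes "\<And>a b. E a b \<Longrightarrow> E b a" and "reach_in A E a b"
  shows "reach_in A E b a"
proof -
  have "sym {(x, y). x \<in> A \<and> y \<in> A \<and> E x y}"
    using assms(1) by (auto intro: symI)
  then show ?thesis
    using assms(2) sym_rtrancl unfolding reach_in_def by (blast dest: symD)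
qed

lemma comp_in_isolated:
  assumes "a \<in> A" and "\<forall>b\<in>A. \<not> E a b"
  shows "comp_in A E a = {a}"
proof -
  have "b = a" if "(a, b) \<in> {(x, y). x \<in> A \<and> y \<in> A \<and> E x y}\<^sup>*" for b
    using that by (rule converse_rtranclE) (use assms in auto)
  then show ?thesis
    using assms(1) unfolding comp_in_def reach_in_def by auto
qed

lemma card_comp_in_ge:
  assumes "finite A" and "B \<subseteq> A" and "\<forall>b\<in>B. reach_in A E a b"
  shows "card B \<le> card (comp_in A E a)"
  using assms by (intro card_mono) (auto simp: comp_in_def)

lemma Rg_cutset_no_isolated:
  assumes "is_Rg_cutset g V E S" and "g \<ge> 1" and "a \<in> V - S"
  shows "\<exists>b\<in>V - S. E a b"
proof (rule ccontr)
  assume "\<not> (\<exists>b\<in>V - S. E a b)"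
  then have "comp_in (V - S) E a = {a}"
    using assms(3) by (intro comp_in_isolated) auto
  moreover have "card (comp_in (V - S) E a) \<ge> g + 1"
    using assms(1,3) unfolding is_Rg_cutset_def by blast
  ultimately show False
    using assms(2) by simp
qed

lemma not_cutset_if_hub:
  assumes "\<And>a b. E a b \<Longrightarrow> E b a" and "h \<in> V - S"
    and "\<forall>a\<in>V - S. reach_in (V - S) E a h"
  shows "\<not> is_cutset V E S"
  using assms reach_in_sym reach_in_trans unfolding is_cutset_def by metis

lemma kappa_g_eqI:
  assumes "is_Rg_cutset g V E S" and "card S = m"
    and "\<And>S'. is_Rg_cutset g V E S' \<Longrightarrow> m \<le> card S'"
  shows "kappa_g g V E = m"
  unfolding kappa_g_def using assms by (intro Least_equality) blast+

lemma T_adj_sym: "T_adj a b \<Longrightarrow> T_adj b a"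
  unfolding T_adj_def by blast

lemma T_adj_W [simp]: "T_adj W b \<longleftrightarrow> (\<exists>i. b = U i) \<or> (\<exists>i. b = C i)"
  by (cases b) (auto simp: T_adj_def T_adj0_def)

lemma T_adj_U [simp]: "T_adj (U i) b \<longleftrightarrow> b = W"
  by (cases b) (auto simp: T_adj_def T_adj0_def)

lemma T_adj_C [simp]: "T_adj (C i) b \<longleftrightarrow> b = W \<or> (\<exists>j. b = L i j)"
  by (cases b) (auto simp: T_adj_def T_adj0_def)

lemma T_adj_L [simp]: "T_adj (L i j) b \<longleftrightarrow> b = C i"
  by (cases b) (auto simp: T_adj_def T_adj0_def)

lemma W_in_T_verts [simp]: "W \<in> T_verts g k r x"
  by (simp add: T_verts_def)

lemma U_in_T_verts_iff [simp]: "U i \<in> T_verts g k r x \<longleftrightarrow> 1 \<le> i \<and> i \<le> k - 1"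
  by (auto simp: T_verts_def)

lemma C_in_T_verts_iff [simp]: "C i \<in> T_verts g k r x \<longleftrightarrow> 1 \<le> i \<and> i \<le> r + 1"
  by (auto simp: T_verts_def)

lemma L_in_T_verts_iff [simp]:
  "L i j \<in> T_verts g k r x \<longleftrightarrow>
     (1 \<le> i \<and> i \<le> r \<and> 1 \<le> j \<and> j \<le> g) \<or> (i = r + 1 \<and> 1 \<le> j \<and> j \<le> x)"
  by (auto simp: T_verts_def)

lemma T_verts_eq:
  "T_verts g k r x = {W} \<union> U ` {1..k - 1} \<union> C ` {1..r + 1}
     \<union> (\<lambda>(i, j). L i j) ` ({1..r} \<times> {1..g}) \<union> L (r + 1) ` {1..x}"
  by (auto simp: T_verts_def)

lemma finite_T_verts [simp]: "finite (T_verts g k r x)"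
  unfolding T_verts_eq by auto

lemma card_T_verts:
  assumes "k \<ge> 1"
  shows "card (T_verts g k r x) = (g + 1) * r + x + 1 + k"
proof -
  have "card (U ` {1..k - 1}) = k - 1" "card (C ` {1..r + 1}) = r + 1"
    "card (L (r + 1) ` {1..x}) = x"
    by (simp_all add: card_image inj_on_def)
  moreover have "card ((\<lambda>(i, j). L i j) ` ({1..r} \<times> {1..g})) = r * g"
    by (subst card_image) (auto simp: inj_on_def)
  ultimately have "card (T_verts g k r x) = 1 + (k - 1) + (r + 1) + r * g + x"
    unfolding T_verts_eq by (subst card_Un_disjoint, simp, simp, force)+ simp
  then show ?thesis
    using assms by (simp add: algebra_simps)
qed

definition hub_set :: "nat \<Rightarrow> vtx set" where
  "hub_set k = insert W (U ` {1..k - 1})"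

lemma card_hub_set: "k \<ge> 1 \<Longrightarrow> card (hub_set k) = k"
  unfolding hub_set_def by (subst card_insert_disjoint) (auto simp: card_image inj_on_def)

fun star_index :: "vtx \<Rightarrow> nat" where
  "star_index (C i) = i"
| "star_index (L i j) = i"
| "star_index _ = 0"

lemma reach_in_star_index:
  assumes "W \<notin> A" and "reach_in A T_adj a b"
  shows "star_index a = star_index b"
  using assms(2) unfolding reach_in_def
proof (induction rule: rtrancl_induct)
  case (step y z)
  then show ?case using assms(1) by (cases y) auto
qed simp

lemma hub_set_is_cutset:
  assumes "r \<ge> 1"
  shows "is_cutset (T_verts g k r x) T_adj (hub_set k)"
proof -
  let ?A = "T_verts g k r x - hub_set k"
  have "\<not> reach_in ?A T_adj (C 1) (C (r + 1))"
    using reach_in_star_index[of ?A "C 1" "C (r + 1)"] assms by (auto simp: hub_set_def)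
  moreover have "C 1 \<in> ?A" "C (r + 1) \<in> ?A"
    by (auto simp: hub_set_def)
  moreover have "hub_set k \<subseteq> T_verts g k r x"
    by (auto simp: hub_set_def)
  ultimately show ?thesis
    unfolding is_cutset_def by blast
qed

lemma card_comp_in_hub_complement:
  assumes "g \<le> x" and "a \<in> T_verts g k r x - hub_set k"
  shows "g + 1 \<le> card (comp_in (T_verts g k r x - hub_set k) T_adj a)"
proof -
  let ?A = "T_verts g k r x - hub_set k"
  obtain i where i: "1 \<le> i" "i \<le> r + 1" and a_Ci: "reach_in ?A T_adj a (C i)"
  proof (cases a)
    case (C i)
    then show ?thesis using that[of i] assms(2) reach_in_refl[of ?A T_adj a] by auto
  next
    case (L i j)
    then show ?thesis using that[of i] assms(2) reach_in_edge[of a ?A "C i" T_adj]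
      by (force simp: hub_set_def)
  qed (use assms(2) in \<open>auto simp: hub_set_def\<close>)
  let ?B = "insert (C i) (L i ` {1..g})"
  have "?B \<subseteq> ?A"
    using i assms(1) by (auto simp: hub_set_def)
  moreover have "reach_in ?A T_adj a b" if "b \<in> ?B" for b
  proof -
    have "reach_in ?A T_adj (C i) b"
    proof (cases "b = C i")
      case False
      then show ?thesis
        using that \<open>?B \<subseteq> ?A\<close> by (intro reach_in_edge) auto
    qed (simp add: reach_in_refl)
    then show ?thesis
      by (rule reach_in_trans[OF a_Ci])
  qed
  ultimately have "card ?B \<le> card (comp_in ?A T_adj a)"
    by (intro card_comp_in_ge) auto
  moreover have "card ?B = g + 1"
    by (subst card_insert_disjoint) (auto simp: card_image inj_on_def)
  ultimately show ?thesis by simp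
qed

lemma hub_set_is_Rg_cutset:
  assumes "r \<ge> 1" and "g \<le> x"
  shows "is_Rg_cutset g (T_verts g k r x) T_adj (hub_set k)"
  unfolding is_Rg_cutset_def
  using hub_set_is_cutset[OF assms(1)] card_comp_in_hub_complement[OF assms(2)] by blast

lemma Rg_cutset_contains_W:
  assumes "is_Rg_cutset g (T_verts g k r x) T_adj S" and "g \<ge> 1"
  shows "W \<in> S"
proof (rule ccontr)
  assume "W \<notin> S"
  let ?A = "T_verts g k r x - S"
  have W_A: "W \<in> ?A"
    using \<open>W \<notin> S\<close> by simp
  have "reach_in ?A T_adj a W" if a: "a \<in> ?A" for a
  proof (cases a)
    case W
    then show ?thesis by (simp add: reach_in_refl)
  next
    case (L i j)
    then have "C i \<in> ?A"
      using Rg_cutset_no_isolated[OF assms a] by auto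
    then show ?thesis
      using a L W_A reach_in_edge[of _ ?A _ T_adj] reach_in_trans by (metis T_adj_C T_adj_L)
  qed (use a W_A reach_in_edge[of a ?A W T_adj] in auto)
  then have "\<not> is_cutset (T_verts g k r x) T_adj S"
    using W_A T_adj_sym by (intro not_cutset_if_hub) auto
  with assms(1) show False
    unfolding is_Rg_cutset_def by blast
qed

lemma hub_set_subset_Rg_cutset:
  assumes "is_Rg_cutset g (T_verts g k r x) T_adj S" and "g \<ge> 1"
  shows "hub_set k \<subseteq> S"
proof -
  have "W \<in> S"
    using assms by (rule Rg_cutset_contains_W)
  moreover have "U j \<in> S" if "1 \<le> j" "j \<le> k - 1" for j
    using Rg_cutset_no_isolated[OF assms, of "U j"] \<open>W \<in> S\<close> that by auto
  ultimately show ?thesis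
    unfolding hub_set_def by auto
qed

theorem lemma5p1:
  fixes g k r x :: nat
  assumes "g \<ge> 1" and "k \<ge> 1" and "r \<ge> 1"
    and "g + 1 \<le> x" and "x \<le> 2 * g"
  shows "card (T_verts g k r x) = (g + 1) * r + x + 1 + k
    \<and> (\<exists>S. is_Rg_cutset g (T_verts g k r x) T_adj S)
    \<and> kappa_g g (T_verts g k r x) T_adj = k"
proof -
  have hub: "is_Rg_cutset g (T_verts g k r x) T_adj (hub_set k)"
    using assms(3,4) by (intro hub_set_is_Rg_cutset) auto
  have "card (hub_set k) \<le> card S" if "is_Rg_cutset g (T_verts g k r x) T_adj S" for S
  proof (rule card_mono)
    show "finite S"
      using that finite_subset[of S "T_verts g k r x"]
      unfolding is_Rg_cutset_def is_cutset_def by auto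
    show "hub_set k \<subseteq> S"
      using that assms(1) by (rule hub_set_subset_Rg_cutset)
  qed
  then have "kappa_g g (T_verts g k r x) T_adj = k"
    using hub card_hub_set[OF assms(2)] by (intro kappa_g_eqI) auto
  then show ?thesis
    using card_T_verts[OF assms(2)] hub by blast
qed

end
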